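(* Let $T=\mathbb{T}_q$ be the homogeneous tree in which every vertex has degree $q+1$, where $q\ge2$ is an integer, and let $P$ be simple random walk, $p(x,y)=1/(q+1)$ for $x\sim y$. Let $\rho=2\sqrt q/(q+1)$ and $\lambda\in\mathbb{C}\setminus[-\rho,\rho]$. Then every $\lambda$-polyharmonic function $f$ of order $n\ge1$ has an integral representation $$f(x)=\sum_{k=0}^{n-1}\int_{\partial T}K(x,\xi\mid\lambda)\,\mathrm{hor}(x,\xi)^k\,d\bar\nu_k(\xi),\qquad x\in T,$$ where the complex distributions $\bar\nu_0,\dots,\bar\nu_{n-1}$ are uniquely determined by $f$.
   Context: Fix a root $o$. $\partial T$ is the set of ends (classes of geodesic rays modulo finite initial segments). $x\wedge\xi$ is the last common vertex of the geodesics $\pi(o,x)$ and $\pi(o,\xi)$. The horocycle index is $\mathrm{hor}(x,\xi)=d(x,x\wedge\xi)-d(o,x\wedge\xi)$. For $\lambda\in\mathbb{C}\setminus[-\rho,\rho]$ (the resolvent set of $P$ on $\ell^2(T)$), $G(x,y\mid\lambda)=((\lambda I-P)^{-1}\mathbf 1_y)(x)$, and $K(x,\xi\mid\lambda)=G(x,x\wedge\xi\mid\lambda)/G(o,x\wedge\xi\mid\lambda)$. Explicitly, $K(x,\xi\mid\lambda)=F(\lambda)^{\mathrm{hor}(x,\xi)}$ with $F(\lambda)=\frac{(q+1)\lambda}{2q}\bigl(1-\sqrt{1-\rho^2/\lambda^2}\bigr)$. $f$ is $\lambda$-polyharmonic of order $n$ if $(\lambda I-P)^nf=0$, where $Pf(x)=\sum_yp(x,y)f(y)$.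 $x^-$ is the neighbour of $x\ne o$ closer to $o$, and $\partial T_x$ is the set of ends whose ray from $o$ passes through $x$. A complex distribution is $\nu:\{\partial T_x\}\to\mathbb{C}$ with $\nu(\partial T_x)=\sum_{y^-=x}\nu(\partial T_y)$. Integral of a locally constant $\varphi$ (constant value $\varphi_x$ on $\partial T_x\setminus\bigcup_{y\in\tau,y^-=x}\partial T_y$ for $x$ in a finite subtree $\tau\ni o$): $\int\varphi\,d\nu=\sum_{x\in\tau}\varphi_x(\nu(\partial T_x)-\sum_{y\in\tau,y^-=x}\nu(\partial T_y))$. For fixed $x$, the function $\xi\mapsto K(x,\xi\mid\lambda)\,\mathrm{hor}(x,\xi)^k$ is locally constant, with $\tau=\pi(o,x)$. *)

theory Defs
  imports Complex_Main
begin

text \<open>Model of the homogeneous tree of degree q+1. A vertex is a list of labels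
recording the path from the root o = []; the HEAD of the list is the last step.
The first step from the root (the last list element) has a label in {0..q}
(q+1 choices), every later step a label in {0..<q} (q choices).
The predecessor x^- of x \<noteq> o is tl x.\<close>

definition tree_vertex :: "nat \<Rightarrow> nat list \<Rightarrow> bool" where
  "tree_vertex q xs \<longleftrightarrow> xs = [] \<or> (last xs \<le> q \<and> (\<forall>i\<in>set (butlast xs). i < q))"

definition tree_children :: "nat \<Rightarrow> nat list \<Rightarrow> nat list set" where
  "tree_children q x = (if x = [] then {[i] | i. i \<le> q} else {i # x | i. i < q})"

definition tree_neighbours :: "nat \<Rightarrow> nat list \<Rightarrow> nat list set" where
  "tree_neighbours q x = tree_children q x \<union> (if x = [] then {} else {tl x})"

definition srw_op :: "nat \<Rightarrow> (nat list \<Rightarrow> complex) \<Rightarrow> nat list \<Rightarrow> complex" where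
  "srw_op q f x = (\<Sum>y\<in>tree_neighbours q x. f y) / of_nat (q + 1)"

definition resolvent_op :: "nat \<Rightarrow> complex \<Rightarrow> (nat list \<Rightarrow> complex) \<Rightarrow> nat list \<Rightarrow> complex" where
  "resolvent_op q lam f x = lam * f x - srw_op q f x"

definition polyharmonic :: "nat \<Rightarrow> complex \<Rightarrow> nat \<Rightarrow> (nat list \<Rightarrow> complex) \<Rightarrow> bool" where
  "polyharmonic q lam n f \<longleftrightarrow> (\<forall>x. tree_vertex q x \<longrightarrow> ((resolvent_op q lam ^^ n) f) x = 0)"

definition spec_radius :: "nat \<Rightarrow> real" where
  "spec_radius q = 2 * sqrt (real q) / real (q + 1)"

definition F_fun :: "nat \<Rightarrow> complex \<Rightarrow> complex" where
  "F_fun q lam = of_nat (q + 1) * lam / of_nat (2 * q)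
      * (1 - csqrt (1 - (complex_of_real (spec_radius q))\<^sup>2 / lam\<^sup>2))"

text \<open>Complex distribution, indexed by vertices: nu x stands for nu(\<partial>T_x).\<close>
definition is_distribution :: "nat \<Rightarrow> (nat list \<Rightarrow> complex) \<Rightarrow> bool" where
  "is_distribution q nu \<longleftrightarrow>
     (\<forall>x. tree_vertex q x \<longrightarrow> nu x = (\<Sum>y\<in>tree_children q x. nu y))"

text \<open>Integral of a locally constant function given by values phi on a finite subtree tau.\<close>
definition lc_integral :: "(nat list \<Rightarrow> complex) \<Rightarrow> nat list set \<Rightarrow> (nat list \<Rightarrow> complex) \<Rightarrow> complex" where
  "lc_integral nu tau phi =
     (\<Sum>v\<in>tau. phi v * (nu v - (\<Sum>y\<in>{y\<in>tau. y \<noteq> [] \<and> tl y = v}. nu y)))"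

definition geod_path :: "nat list \<Rightarrow> nat list set" where
  "geod_path x = {drop i x | i. i \<le> length x}"

text \<open>hor(x,\<xi>) for ends \<xi> with x \<and> \<xi> = v (v on \<pi>(o,x)): d(x,v) - d(o,v).\<close>
definition hor_at :: "nat list \<Rightarrow> nat list \<Rightarrow> int" where
  "hor_at x v = int (length x - length v) - int (length v)"

text \<open>\<integral> K(x,\<xi>|\<lambda>) hor(x,\<xi>)^k d\<nu>(\<xi>), with K = F(\<lambda>)^hor, over the subtree \<pi>(o,x).\<close>
definition kernel_integral :: "nat \<Rightarrow> complex \<Rightarrow> nat \<Rightarrow> (nat list \<Rightarrow> complex) \<Rightarrow> nat list \<Rightarrow> complex" where
  "kernel_integral q lam k nu x =
     lc_integral nu (geod_path x) (\<lambda>v. F_fun q lam powi hor_at x v * (of_int (hor_at x v)) ^ k)"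

end

theory Submission
  imports Defs
begin

(* Every kernel integral depends on x only through the horocycle indices 2i - |x| of the vertices
   of \<pi>(o,x), and for a distribution \<nu> the walk P acts on such integrals through the one-dimensional
   operator \<phi> \<mapsto> (\<phi>(h-1) + q \<phi>(h+1))/(q+1) on functions of the horocycle index.
   Since F solves (q+1)\<lambda>F = 1 + qF\<^sup>2, the induced operator \<lambda> - P maps F^h h^k to F^h times a
   polynomial in h of degree exactly k - 1 (the leading coefficient is nonzero because \<lambda> is
   outside [-\<rho>,\<rho>]). So \<lambda>I - P maps the kernel integrals of order k+1 onto those of order k and
   annihilates them after k steps, which reduces existence and uniqueness to the harmonic case.
   There the distribution is read off from f by \<nu>(x) = (f(x) - F f(x\<^sup>-)) / (F^(-|x|) (1 - F\<^sup>2)). *)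

lemma tree_vertex_drop: "tree_vertex q x \<Longrightarrow> tree_vertex q (drop i x)"
  unfolding tree_vertex_def
  by (auto simp: butlast_drop last_drop dest: in_set_dropD)

lemma tree_vertex_tl: "tree_vertex q x \<Longrightarrow> tree_vertex q (tl x)"
  using tree_vertex_drop[of q x 1] by (simp add: drop_Suc)

lemma tree_vertex_children: "tree_vertex q x \<Longrightarrow> y \<in> tree_children q x \<Longrightarrow> tree_vertex q y"
  unfolding tree_children_def tree_vertex_def by (auto split: if_splits)

lemma tree_vertex_neighbours: "tree_vertex q x \<Longrightarrow> y \<in> tree_neighbours q x \<Longrightarrow> tree_vertex q y"
  unfolding tree_neighbours_def
  by (auto split: if_splits intro: tree_vertex_children tree_vertex_tl)

lemma sum_tree_children_Nil: "(\<Sum>y\<in>tree_children q []. g y) = (\<Sum>i\<le>q. g [i])"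
proof -
  have "tree_children q [] = (\<lambda>i. [i]) ` {..q}" unfolding tree_children_def by auto
  moreover have "inj_on (\<lambda>i. [i]) {..q}" by (auto simp: inj_on_def)
  ultimately show ?thesis by (simp add: sum.reindex)
qed

lemma sum_tree_children_Cons: "x \<noteq> [] \<Longrightarrow> (\<Sum>y\<in>tree_children q x. g y) = (\<Sum>i<q. g (i # x))"
proof -
  assume "x \<noteq> []"
  then have "tree_children q x = (\<lambda>i. i # x) ` {..<q}" unfolding tree_children_def by auto
  moreover have "inj_on (\<lambda>i. i # x) {..<q}" by (auto simp: inj_on_def)
  ultimately show ?thesis by (simp add: sum.reindex)
qed

lemma sum_tree_neighbours_Nil: "(\<Sum>y\<in>tree_neighbours q []. g y) = (\<Sum>i\<le>q. g [i])"
  unfolding tree_neighbours_def by (simp add: sum_tree_children_Nil)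

lemma sum_tree_neighbours_Cons:
  assumes "x \<noteq> []"
  shows "(\<Sum>y\<in>tree_neighbours q x. g y) = (\<Sum>i<q. g (i # x)) + g (tl x)"
proof -
  have "finite (tree_children q x)"
    using assms unfolding tree_children_def by auto
  moreover have "tl x \<notin> tree_children q x"
    using assms unfolding tree_children_def by (auto dest: arg_cong[of _ _ length])
  ultimately have "(\<Sum>y\<in>tree_neighbours q x. g y) = (\<Sum>y\<in>tree_children q x. g y) + g (tl x)"
    using assms unfolding tree_neighbours_def by (simp add: add.commute)
  then show ?thesis using assms by (simp add: sum_tree_children_Cons)
qed

lemma is_distribution_add:
  "is_distribution q \<nu> \<Longrightarrow> is_distribution q \<nu>' \<Longrightarrow> is_distribution q (\<lambda>y. \<nu> y + \<nu>' y)"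
  unfolding is_distribution_def by (simp add: sum.distrib)

lemma is_distribution_diff:
  "is_distribution q \<nu> \<Longrightarrow> is_distribution q \<nu>' \<Longrightarrow> is_distribution q (\<lambda>y. \<nu> y - \<nu>' y)"
  unfolding is_distribution_def by (simp add: sum_subtractf)

lemma is_distribution_scale: "is_distribution q \<nu> \<Longrightarrow> is_distribution q (\<lambda>y. c * \<nu> y)"
  unfolding is_distribution_def by (simp add: sum_distrib_left)

lemma is_distribution_zero: "is_distribution q (\<lambda>y. 0)"
  unfolding is_distribution_def by simp

section \<open>Integrals of functions of the horocycle index\<close>

text \<open>The summand \<open>i\<close> belongs to the vertex \<open>drop i x\<close> of \<open>\<pi>(o,x)\<close>, whose horocycle index
  with respect to \<open>x\<close> is \<open>2i - |x|\<close>.\<close>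

definition hor_integral :: "(int \<Rightarrow> complex) \<Rightarrow> (nat list \<Rightarrow> complex) \<Rightarrow> nat list \<Rightarrow> complex" where
  "hor_integral \<phi> \<nu> x = (\<Sum>i\<le>length x. \<phi> (2 * int i - int (length x)) *
      (\<nu> (drop i x) - (if i = 0 then 0 else \<nu> (drop (i - 1) x))))"

definition hor_kernel :: "nat \<Rightarrow> complex \<Rightarrow> nat \<Rightarrow> int \<Rightarrow> complex" where
  "hor_kernel q lam k h = F_fun q lam powi h * of_int h ^ k"

lemma hor_integral_Nil: "hor_integral \<phi> \<nu> [] = \<phi> 0 * \<nu> []"
  unfolding hor_integral_def by simp

lemma hor_integral_Cons: "hor_integral \<phi> \<nu> (a # x) =
   (\<phi> (- int (length x) - 1) - \<phi> (1 - int (length x))) * \<nu> (a # x)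
   + hor_integral (\<lambda>h. \<phi> (h + 1)) \<nu> x"
proof -
  define m where "m = length x"
  have "hor_integral \<phi> \<nu> (a # x) = \<phi> (- int m - 1) * \<nu> (a # x) +
     (\<Sum>i\<le>m. \<phi> (2 * int i - int m + 1) * (\<nu> (drop i x) - \<nu> (drop i (a # x))))"
    unfolding hor_integral_def m_def[symmetric] length_Cons sum.atMost_Suc_shift
    apply (simp del: sum.atMost_Suc add: algebra_simps)
    by (rule disjI2, rule arg_cong[where f=\<phi>]) simp
  also have "(\<Sum>i\<le>m. \<phi> (2 * int i - int m + 1) * (\<nu> (drop i x) - \<nu> (drop i (a # x))))
     = (\<Sum>i\<le>m. \<phi> (2 * int i - int m + 1) * (\<nu> (drop i x) - (if i = 0 then 0 else \<nu> (drop (i - 1) x)))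
         - (if i = 0 then \<phi> (1 - int m) * \<nu> (a # x) else 0))"
    by (rule sum.cong) (auto simp: algebra_simps drop_Cons')
  also have "\<dots> = hor_integral (\<lambda>h. \<phi> (h + 1)) \<nu> x - \<phi> (1 - int m) * \<nu> (a # x)"
    unfolding hor_integral_def m_def[symmetric] by (simp add: sum_subtractf sum.distrib algebra_simps)
  finally show ?thesis unfolding m_def by (simp add: algebra_simps)
qed

lemma hor_integral_linear:
  "hor_integral (\<lambda>h. a * \<phi> h + b * \<psi> h) \<nu> x = a * hor_integral \<phi> \<nu> x + b * hor_integral \<psi> \<nu> x"
  unfolding hor_integral_def sum_distrib_left sum.distrib[symmetric]
  by (intro sum.cong refl) (simp add: algebra_simps)

lemma hor_integral_sum: "hor_integral (\<lambda>h. \<Sum>j\<in>J. g j h) \<nu> x = (\<Sum>j\<in>J. hor_integral (g j) \<nu> x)"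
  by (simp add: hor_integral_def sum_distrib_right) (rule sum.swap)

lemma hor_integral_scale: "hor_integral (\<lambda>h. c * \<phi> h) \<nu> x = c * hor_integral \<phi> \<nu> x"
  unfolding hor_integral_def sum_distrib_left
  by (intro sum.cong refl) (simp add: algebra_simps)

lemma hor_integral_zero: "hor_integral (\<lambda>h. 0) \<nu> x = 0"
  by (simp add: hor_integral_def)

lemma hor_integral_zero_distribution: "hor_integral \<phi> (\<lambda>y. 0) x = 0"
  by (simp add: hor_integral_def)

lemma hor_integral_add_distribution:
  "hor_integral \<phi> (\<lambda>y. \<nu> y + \<nu>' y) x = hor_integral \<phi> \<nu> x + hor_integral \<phi> \<nu>' x"
  unfolding hor_integral_def sum.distrib[symmetric]
  by (intro sum.cong refl) (simp add: algebra_simps)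

lemma hor_integral_diff_distribution:
  "hor_integral \<phi> (\<lambda>y. \<nu> y - \<nu>' y) x = hor_integral \<phi> \<nu> x - hor_integral \<phi> \<nu>' x"
  unfolding hor_integral_def sum_subtractf[symmetric]
  by (intro sum.cong refl) (simp add: algebra_simps)

lemma hor_integral_scale_distribution:
  "hor_integral \<phi> (\<lambda>y. c * \<nu> y) x = c * hor_integral \<phi> \<nu> x"
  unfolding hor_integral_def sum_distrib_left
  by (intro sum.cong refl) (simp add: algebra_simps)

lemma hor_integral_cong_distribution:
  "tree_vertex q x \<Longrightarrow> (\<forall>y. tree_vertex q y \<longrightarrow> \<nu> y = \<nu>' y) \<Longrightarrow>
   hor_integral \<phi> \<nu> x = hor_integral \<phi> \<nu>' x"
  unfolding hor_integral_def by (intro sum.cong refl) (auto simp: tree_vertex_drop)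

lemma geod_path_children:
  assumes "i \<le> length x"
  shows "{y \<in> (\<lambda>j. drop j x) ` {..length x}. y \<noteq> [] \<and> tl y = drop i x} =
    (if i = 0 then {} else {drop (i - 1) x})"
proof -
  have "y \<in> (\<lambda>j. drop j x) ` {..length x} \<and> y \<noteq> [] \<and> tl y = drop i x
    \<longleftrightarrow> i \<noteq> 0 \<and> y = drop (i - 1) x" for y
  proof
    assume "y \<in> (\<lambda>j. drop j x) ` {..length x} \<and> y \<noteq> [] \<and> tl y = drop i x"
    then obtain j where j: "j \<le> length x" "y = drop j x" "y \<noteq> []" "tl y = drop i x"
      by blast
    then have "length (drop (Suc j) x) = length (drop i x)" by (simp add: drop_Suc tl_drop)
    moreover have "j < length x" using j(1-3) by (cases "j = length x") auto
    ultimately have "Suc j = i" using assms by simp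
    then show "i \<noteq> 0 \<and> y = drop (i - 1) x" using j by auto
  next
    assume i: "i \<noteq> 0 \<and> y = drop (i - 1) x"
    then show "y \<in> (\<lambda>j. drop j x) ` {..length x} \<and> y \<noteq> [] \<and> tl y = drop i x"
      using assms by (cases i) (auto simp: tl_drop drop_Suc[symmetric])
  qed
  then show ?thesis by auto
qed

lemma kernel_integral_eq_hor_integral:
  "kernel_integral q lam k \<nu> x = hor_integral (hor_kernel q lam k) \<nu> x"
proof -
  have "inj_on (\<lambda>i. drop i x) {..length x}"
    by (rule inj_onI) (metis atMost_iff diff_diff_cancel length_drop)
  moreover have "geod_path x = (\<lambda>i. drop i x) ` {..length x}"
    unfolding geod_path_def by auto
  moreover have "hor_at x (drop i x) = 2 * int i - int (length x)" if "i \<le> length x" for i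
    using that unfolding hor_at_def by simp
  ultimately show ?thesis
    unfolding kernel_integral_def lc_integral_def hor_integral_def
    by (simp add: sum.reindex) (intro sum.cong refl, simp add: geod_path_children hor_kernel_def)
qed

section \<open>The walk acting on horocyclic integrals\<close>

definition hor_resolvent :: "nat \<Rightarrow> complex \<Rightarrow> (int \<Rightarrow> complex) \<Rightarrow> int \<Rightarrow> complex" where
  "hor_resolvent q lam \<phi> h = lam * \<phi> h - (\<phi> (h - 1) + of_nat q * \<phi> (h + 1)) / of_nat (q + 1)"

lemma srw_op_hor_integral:
  assumes x: "tree_vertex q x" and \<nu>: "is_distribution q \<nu>"
  shows "srw_op q (hor_integral \<phi> \<nu>) x =
    hor_integral (\<lambda>h. (\<phi> (h - 1) + of_nat q * \<phi> (h + 1)) / of_nat (q + 1)) \<nu> x"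
proof (cases x)
  case Nil
  have \<nu>: "\<nu> [] = (\<Sum>i\<le>q. \<nu> [i])"
    using \<nu> unfolding is_distribution_def by (auto simp: sum_tree_children_Nil tree_vertex_def)
  have "srw_op q (hor_integral \<phi> \<nu>) [] =
      (\<Sum>i\<le>q. (\<phi> (- 1) - \<phi> 1) * \<nu> [i] + \<phi> 1 * \<nu> []) / of_nat (q + 1)"
    unfolding srw_op_def sum_tree_neighbours_Nil by (simp add: hor_integral_Cons hor_integral_Nil)
  also have "\<dots> = ((\<phi> (- 1) - \<phi> 1) * \<nu> [] + of_nat (q + 1) * \<phi> 1 * \<nu> []) / of_nat (q + 1)"
    by (simp add: sum.distrib sum_distrib_left[symmetric] \<nu>[symmetric])
  finally show ?thesis
    unfolding Nil by (simp add: hor_integral_Nil field_simps)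
next
  case (Cons a x')
  define c where "c = \<phi> (- int (length x) - 1) - \<phi> (1 - int (length x))"
  have \<nu>x: "\<nu> x = (\<Sum>i<q. \<nu> (i # x))"
    using \<nu> x unfolding is_distribution_def by (auto simp: sum_tree_children_Cons Cons)
  have children: "(\<Sum>i<q. hor_integral \<phi> \<nu> (i # x)) =
      c * \<nu> x + of_nat q * hor_integral (\<lambda>h. \<phi> (h + 1)) \<nu> x"
    unfolding hor_integral_Cons c_def
    by (simp add: sum.distrib sum_distrib_left[symmetric] \<nu>x[symmetric])
  have parent: "hor_integral \<phi> \<nu> (tl x) = hor_integral (\<lambda>h. \<phi> (h - 1)) \<nu> x - c * \<nu> x"
    unfolding c_def Cons by (simp add: hor_integral_Cons algebra_simps)
  have average: "hor_integral (\<lambda>h. (\<phi> (h - 1) + of_nat q * \<phi> (h + 1)) / of_nat (q + 1)) \<nu> x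
      = (1 / of_nat (q + 1)) * hor_integral (\<lambda>h. \<phi> (h - 1)) \<nu> x
        + (of_nat q / of_nat (q + 1)) * hor_integral (\<lambda>h. \<phi> (h + 1)) \<nu> x"
    by (subst hor_integral_linear[symmetric]) (simp add: add_divide_distrib)
  have "srw_op q (hor_integral \<phi> \<nu>) x
      = ((\<Sum>i<q. hor_integral \<phi> \<nu> (i # x)) + hor_integral \<phi> \<nu> (tl x)) / of_nat (q + 1)"
    unfolding srw_op_def using Cons by (simp add: sum_tree_neighbours_Cons)
  then show ?thesis
    unfolding children parent average by (simp add: add_divide_distrib)
qed

lemma resolvent_op_hor_integral:
  assumes "tree_vertex q x" and "is_distribution q \<nu>"
  shows "resolvent_op q lam (hor_integral \<phi> \<nu>) x = hor_integral (hor_resolvent q lam \<phi>) \<nu> x"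
proof -
  have "hor_integral (hor_resolvent q lam \<phi>) \<nu> x = lam * hor_integral \<phi> \<nu> x
      + (-1) * hor_integral (\<lambda>h. (\<phi> (h - 1) + of_nat q * \<phi> (h + 1)) / of_nat (q + 1)) \<nu> x"
    unfolding hor_integral_linear[symmetric] hor_resolvent_def
    by (intro arg_cong[where f="\<lambda>\<phi>. hor_integral \<phi> \<nu> x"] ext)
      (simp add: diff_divide_distrib add_divide_distrib)
  then show ?thesis unfolding resolvent_op_def srw_op_hor_integral[OF assms] by simp
qed

lemma resolvent_op_cong:
  assumes "\<forall>y. tree_vertex q y \<longrightarrow> g y = g' y" "tree_vertex q x"
  shows "resolvent_op q lam g x = resolvent_op q lam g' x"
  using assms tree_vertex_neighbours[OF assms(2)]
  unfolding resolvent_op_def srw_op_def by (auto intro!: sum.cong)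

lemma resolvent_op_power_cong:
  assumes "\<forall>y. tree_vertex q y \<longrightarrow> g y = g' y"
  shows "\<forall>x. tree_vertex q x \<longrightarrow> (resolvent_op q lam ^^ m) g x = (resolvent_op q lam ^^ m) g' x"
  using assms by (induction m) (auto intro: resolvent_op_cong)

lemma resolvent_op_sum:
  "resolvent_op q lam (\<lambda>x. \<Sum>k\<in>K. g k x) = (\<lambda>x. \<Sum>k\<in>K. resolvent_op q lam (g k) x)"
  unfolding resolvent_op_def srw_op_def
  by (auto simp: sum_distrib_left sum_subtractf sum_divide_distrib intro!: ext) (rule sum.swap)

lemma resolvent_op_power_sum:
  "(resolvent_op q lam ^^ m) (\<lambda>x. \<Sum>k\<in>K. g k x) = (\<lambda>x. \<Sum>k\<in>K. (resolvent_op q lam ^^ m) (g k) x)"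
  by (induction m) (simp_all add: resolvent_op_sum)

lemma resolvent_op_diff:
  "resolvent_op q lam (\<lambda>x. g x - g' x) y = resolvent_op q lam g y - resolvent_op q lam g' y"
  unfolding resolvent_op_def srw_op_def
  by (simp add: sum_subtractf diff_divide_distrib algebra_simps)

lemma resolvent_op_power_zero: "(resolvent_op q lam ^^ m) (\<lambda>x. 0) = (\<lambda>x. 0)"
  by (induction m) (simp_all add: resolvent_op_def srw_op_def)

lemma resolvent_op_power_hor_integral:
  assumes "is_distribution q \<nu>"
  shows "\<forall>x. tree_vertex q x \<longrightarrow>
    (resolvent_op q lam ^^ m) (hor_integral \<phi> \<nu>) x = hor_integral ((hor_resolvent q lam ^^ m) \<phi>) \<nu> x"
proof (induction m)
  case (Suc m)
  show ?case
  proof (intro allI impI)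
    fix x assume x: "tree_vertex q x"
    have "(resolvent_op q lam ^^ Suc m) (hor_integral \<phi> \<nu>) x
        = resolvent_op q lam (hor_integral ((hor_resolvent q lam ^^ m) \<phi>) \<nu>) x"
      using Suc x by (auto intro: resolvent_op_cong)
    then show "(resolvent_op q lam ^^ Suc m) (hor_integral \<phi> \<nu>) x
        = hor_integral ((hor_resolvent q lam ^^ Suc m) \<phi>) \<nu> x"
      using resolvent_op_hor_integral[OF x assms] by simp
  qed
qed simp

lemma hor_resolvent_linear:
  "hor_resolvent q lam (\<lambda>h. a * \<phi> h + b * \<psi> h)
    = (\<lambda>h. a * hor_resolvent q lam \<phi> h + b * hor_resolvent q lam \<psi> h)"
  unfolding hor_resolvent_def by (rule ext) (simp add: algebra_simps add_divide_distrib diff_divide_distrib)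

lemma hor_resolvent_zero: "hor_resolvent q lam (\<lambda>h. 0) = (\<lambda>h. 0)"
  unfolding hor_resolvent_def by simp

lemma hor_resolvent_scale: "hor_resolvent q lam (\<lambda>h. c * \<phi> h) = (\<lambda>h. c * hor_resolvent q lam \<phi> h)"
  using hor_resolvent_linear[of q lam c \<phi> 0 \<phi>] by simp

lemma hor_resolvent_sum:
  "hor_resolvent q lam (\<lambda>h. \<Sum>j\<in>J. g j h) = (\<lambda>h. \<Sum>j\<in>J. hor_resolvent q lam (g j) h)"
  unfolding hor_resolvent_def
  by (rule ext) (simp add: sum_distrib_left sum_subtractf sum.distrib sum_divide_distrib add_divide_distrib)

lemma hor_resolvent_power_linear:
  "(hor_resolvent q lam ^^ m) (\<lambda>h. a * \<phi> h + \<psi> h)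
    = (\<lambda>h. a * (hor_resolvent q lam ^^ m) \<phi> h + (hor_resolvent q lam ^^ m) \<psi> h)"
proof (induction m)
  case (Suc m)
  show ?case
    using hor_resolvent_linear[of q lam a "(hor_resolvent q lam ^^ m) \<phi>" 1 "(hor_resolvent q lam ^^ m) \<psi>"]
    by (simp add: Suc)
qed simp

section \<open>The function F\<close>

lemma spec_radius_sq: "(spec_radius q)\<^sup>2 = 4 * real q / (real q + 1)\<^sup>2"
  unfolding spec_radius_def by (simp add: power_divide power_mult_distrib)

lemma spec_radius_nonneg: "spec_radius q \<ge> 0"
  unfolding spec_radius_def by simp

lemma spec_radius_sq_complex:
  "(complex_of_real (spec_radius q))\<^sup>2 = 4 * of_nat q / (of_nat q + 1)\<^sup>2"
proof -
  have "(complex_of_real (spec_radius q))\<^sup>2 = complex_of_real ((spec_radius q)\<^sup>2)" by simp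
  then show ?thesis unfolding spec_radius_sq by simp
qed

lemma spec_radius_le_1: "spec_radius q \<le> 1"
proof -
  have "4 * real q \<le> (real q + 1)\<^sup>2"
    using sum_squares_ge_zero[of "real q - 1" 0] by (simp add: power2_eq_square algebra_simps)
  then have "(spec_radius q)\<^sup>2 \<le> 1\<^sup>2" unfolding spec_radius_sq by (simp add: field_simps)
  then show ?thesis by (rule power2_le_imp_le) simp
qed

lemma of_nat_add_1_neq_0: "(of_nat n + 1 :: 'a :: semiring_char_0) \<noteq> 0"
  by (metis of_nat_Suc of_nat_neq_0 add.commute)

lemma F_fun_quadratic:
  assumes "q > 0" and "lam \<noteq> 0"
  shows "of_nat (q + 1) * lam * F_fun q lam = 1 + of_nat q * (F_fun q lam)\<^sup>2"
proof -
  define a where "a = of_nat (q + 1) * lam / of_nat (2 * q)"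
  define s where "s = csqrt (1 - (complex_of_real (spec_radius q))\<^sup>2 / lam\<^sup>2)"
  have F: "F_fun q lam = a * (1 - s)" unfolding F_fun_def a_def s_def ..
  have q: "(of_nat q :: complex) \<noteq> 0" "(of_nat q + 1 :: complex) \<noteq> 0"
    using assms(1) of_nat_add_1_neq_0[of q, where 'a=complex] by simp_all
  have "of_nat (q + 1) * lam * F_fun q lam - of_nat q * (F_fun q lam)\<^sup>2 - 1
      = of_nat q * a\<^sup>2 * (1 - s\<^sup>2) - 1"
    unfolding F a_def using q by (simp add: field_simps power2_eq_square)
  also have "\<dots> = 0"
  proof -
    have "(2 * lam * of_nat q * (of_nat q + 1))\<^sup>2 \<noteq> 0" using q assms(2) by simp
    then show ?thesis
      unfolding s_def power2_csqrt spec_radius_sq_complex a_def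
      using q assms(2) by (simp add: field_simps power2_eq_square)
  qed
  finally show ?thesis by (simp add: algebra_simps)
qed

locale tree_resolvent =
  fixes q :: nat and lam :: complex
  assumes q_ge_2: "q \<ge> 2"
    and lam_not_spectrum: "lam \<notin> complex_of_real ` {- spec_radius q .. spec_radius q}"
begin

abbreviation F :: complex where "F \<equiv> F_fun q lam"

lemma lam_nonzero: "lam \<noteq> 0"
  using lam_not_spectrum spec_radius_nonneg[of q] by (auto intro: image_eqI[where x=0])

lemma F_quadratic: "of_nat (q + 1) * lam * F = 1 + of_nat q * F\<^sup>2"
  using F_fun_quadratic[OF _ lam_nonzero] q_ge_2 by simp

lemma F_nonzero: "F \<noteq> 0"
  using F_quadratic by auto

text \<open>\<open>q F\<^sup>2 = 1\<close> would force \<open>\<lambda> = \<plusminus>\<rho>\<close>.\<close>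

lemma q_F_sq_neq_1: "of_nat q * F\<^sup>2 \<noteq> 1"
proof
  define \<rho> where "\<rho> = complex_of_real (spec_radius q)"
  assume qF: "of_nat q * F\<^sup>2 = 1"
  then have "(of_nat q + 1) * lam * F = 2" using F_quadratic by (simp add: add.commute)
  from arg_cong[where f="\<lambda>z. z\<^sup>2", OF this] have "(of_nat q + 1)\<^sup>2 * lam\<^sup>2 * F\<^sup>2 = 4"
    by (simp add: power_mult_distrib)
  then have "(of_nat q + 1)\<^sup>2 * lam\<^sup>2 * (of_nat q * F\<^sup>2) = 4 * of_nat q"
    by (simp add: algebra_simps)
  then have "lam\<^sup>2 = \<rho>\<^sup>2"
    unfolding qF \<rho>_def spec_radius_sq_complex using of_nat_add_1_neq_0[of q, where 'a=complex]
    by (simp add: field_simps)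
  then have "(lam - \<rho>) * (lam + \<rho>) = 0"
    by (simp add: algebra_simps power2_eq_square)
  then have "lam = complex_of_real (spec_radius q) \<or> lam = complex_of_real (- spec_radius q)"
    unfolding \<rho>_def by (auto simp: add_eq_0_iff)
  then show False using lam_not_spectrum spec_radius_nonneg[of q] by auto
qed

text \<open>\<open>F\<^sup>2 = 1\<close> would force \<open>\<lambda> = F\<close> and then \<open>2q = (q + 1)(1 - s)\<close> with the real
  \<open>s = \<surd>(1 - \<rho>\<^sup>2) \<ge> 0\<close>, impossible for \<open>q \<ge> 2\<close>.\<close>

lemma F_sq_neq_1: "F\<^sup>2 \<noteq> 1"
proof
  assume F2: "F\<^sup>2 = 1"
  have qc: "(of_nat q + 1 :: complex) \<noteq> 0" by (rule of_nat_add_1_neq_0)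
  define r where "r = spec_radius q"
  define s where "s = csqrt (1 - (complex_of_real r)\<^sup>2 / lam\<^sup>2)"
  have Fs: "F = of_nat (q + 1) * lam / of_nat (2 * q) * (1 - s)"
    unfolding F_fun_def s_def r_def ..
  from F_quadratic F2 have "of_nat (q + 1) * (lam * F) = of_nat (q + 1) * 1"
    by (simp add: algebra_simps)
  then have "lam * F = 1" using qc by (simp del: of_nat_Suc)
  then have lamF: "lam = F" using F2 by (metis mult.assoc mult_1_right power2_eq_square)
  have r: "0 \<le> r" "r\<^sup>2 \<le> 1"
    using spec_radius_le_1[of q] spec_radius_nonneg[of q] unfolding r_def by (auto simp: power_le_one)
  have "1 - (complex_of_real r)\<^sup>2 / lam\<^sup>2 = complex_of_real (1 - r\<^sup>2)"
    using F2 lamF by simp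
  then have "s = complex_of_real (sqrt (1 - r\<^sup>2))"
    unfolding s_def using r by (simp add: csqrt_of_real)
  moreover have "F * (2 * of_nat q) = F * (of_nat (q + 1) * (1 - s))"
    using Fs qc q_ge_2 lamF by (simp add: field_simps)
  then have "2 * of_nat q = of_nat (q + 1) * (1 - s)" using F_nonzero by simp
  ultimately have "complex_of_real ((real q + 1) * sqrt (1 - r\<^sup>2)) = complex_of_real (1 - real q)"
    by (simp add: algebra_simps)
  then have "(real q + 1) * sqrt (1 - r\<^sup>2) = 1 - real q" by (simp only: of_real_eq_iff)
  moreover have "(real q + 1) * sqrt (1 - r\<^sup>2) \<ge> 0" using r by simp
  ultimately show False using q_ge_2 by simp
qed

lemma hor_kernel_0_Cons:
  "hor_integral (hor_kernel q lam 0) \<nu> (a # x) =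
    F powi (- int (Suc (length x))) * (1 - F\<^sup>2) * \<nu> (a # x) + F * hor_integral (hor_kernel q lam 0) \<nu> x"
proof -
  have "F powi (1 - int (length x)) = F powi (- int (Suc (length x)) + 2)"
    by (rule arg_cong[where f="\<lambda>k. F powi k"]) simp
  also have "\<dots> = F powi (- int (Suc (length x))) * F\<^sup>2"
    using F_nonzero by (subst power_int_add) auto
  finally have coef: "hor_kernel q lam 0 (- int (length x) - 1) - hor_kernel q lam 0 (1 - int (length x))
      = F powi (- int (Suc (length x))) * (1 - F\<^sup>2)"
    unfolding hor_kernel_def
    by (simp add: algebra_simps) (rule arg_cong[where f="\<lambda>k. F powi k"], simp)
  have "hor_kernel q lam 0 (h + 1) = F * hor_kernel q lam 0 h" for h
    unfolding hor_kernel_def using F_nonzero by (simp add: power_int_add_1')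
  then show ?thesis by (simp add: hor_integral_Cons coef hor_integral_scale)
qed

lemma hor_kernel_0_Nil: "hor_integral (hor_kernel q lam 0) \<nu> [] = \<nu> []"
  by (simp add: hor_integral_Nil hor_kernel_def)

lemma hor_kernel_0_integral_eq_0_imp:
  assumes "\<forall>x. tree_vertex q x \<longrightarrow> hor_integral (hor_kernel q lam 0) \<nu> x = 0" and "tree_vertex q y"
  shows "\<nu> y = 0"
proof (cases y)
  case Nil then show ?thesis using assms(1)[rule_format, of "[]"] assms(2) by (simp add: hor_kernel_0_Nil)
next
  case (Cons a x)
  then have "tree_vertex q x" using tree_vertex_tl[OF assms(2)] by simp
  then have "F powi (- int (Suc (length x))) * (1 - F\<^sup>2) * \<nu> y = 0"
    using assms Cons hor_kernel_0_Cons[of \<nu> a x] by simp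
  then show ?thesis using F_nonzero F_sq_neq_1 by simp
qed

text \<open>Solving \<open>hor_kernel_0_Cons\<close> for \<open>\<nu> (a # x)\<close>.\<close>

definition harmonic_density :: "(nat list \<Rightarrow> complex) \<Rightarrow> nat list \<Rightarrow> complex" where
  "harmonic_density f y =
    (if y = [] then f [] else (f y - F * f (tl y)) / (F powi (- int (length y)) * (1 - F\<^sup>2)))"

lemma hor_integral_harmonic_density: "hor_integral (hor_kernel q lam 0) (harmonic_density f) x = f x"
proof (induction x)
  case (Cons a x)
  have "F powi (- int (Suc (length x))) \<noteq> 0" using F_nonzero by simp
  then show ?case
    unfolding hor_kernel_0_Cons Cons.IH using F_sq_neq_1 by (simp add: harmonic_density_def)
qed (simp add: hor_kernel_0_Nil harmonic_density_def)

lemma harmonic_sum_neighbours: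
  assumes "resolvent_op q lam f x = 0"
  shows "(\<Sum>y\<in>tree_neighbours q x. f y) = of_nat (q + 1) * lam * f x"
proof -
  have "lam * f x - (\<Sum>y\<in>tree_neighbours q x. f y) / of_nat (q + 1) = 0"
    using assms unfolding resolvent_op_def srw_op_def by simp
  then show ?thesis using of_nat_add_1_neq_0[of q, where 'a=complex] by (simp add: field_simps)
qed

lemma harmonic_density_is_distribution:
  assumes harmonic: "\<forall>x. tree_vertex q x \<longrightarrow> resolvent_op q lam f x = 0"
  shows "is_distribution q (harmonic_density f)"
  unfolding is_distribution_def
proof (intro allI impI)
  fix x assume x: "tree_vertex q x"
  define \<nu> where "\<nu> = harmonic_density f"
  show "\<nu> x = (\<Sum>y\<in>tree_children q x. \<nu> y)"
  proof (cases x)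
    case Nil
    have "(\<Sum>y\<in>tree_children q x. \<nu> y) = (\<Sum>i\<le>q. (f [i] - F * f []) / (inverse F * (1 - F\<^sup>2)))"
      using Nil by (simp add: sum_tree_children_Nil \<nu>_def harmonic_density_def power_int_minus)
    also have "\<dots> = ((\<Sum>i\<le>q. f [i]) - of_nat (q + 1) * (F * f [])) / (inverse F * (1 - F\<^sup>2))"
      by (simp add: sum_divide_distrib[symmetric] sum_subtractf)
    also have "\<dots> = (of_nat (q + 1) * lam * F - of_nat (q + 1) * F\<^sup>2) * f [] / (1 - F\<^sup>2)"
      using harmonic_sum_neighbours[of f "[]"] harmonic x Nil F_nonzero F_sq_neq_1
      by (simp add: sum_tree_neighbours_Nil field_simps power2_eq_square)
    also have "\<dots> = f []" unfolding F_quadratic using F_sq_neq_1 by (simp add: field_simps)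
    finally show ?thesis using Nil by (simp add: \<nu>_def harmonic_density_def)
  next
    case (Cons a x')
    define P where "P = F powi (- int (Suc (length x)))"
    have P: "P \<noteq> 0" "F powi (- int (length x)) = P * F"
      unfolding P_def using F_nonzero power_int_add_1[of F "- int (Suc (length x))"] by auto
    have "(\<Sum>y\<in>tree_children q x. \<nu> y) = (\<Sum>i<q. (f (i # x) - F * f x) / (P * (1 - F\<^sup>2)))"
      using Cons by (simp add: sum_tree_children_Cons \<nu>_def harmonic_density_def P_def)
    also have "\<dots> = ((\<Sum>i<q. f (i # x)) - of_nat q * (F * f x)) / (P * (1 - F\<^sup>2))"
      by (simp add: sum_divide_distrib[symmetric] sum_subtractf)
    also have "(\<Sum>i<q. f (i # x)) = of_nat (q + 1) * lam * f x - f (tl x)"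
      using harmonic_sum_neighbours[of f x] harmonic x Cons
      by (simp add: sum_tree_neighbours_Cons eq_diff_eq)
    also have "(of_nat (q + 1) * lam * f x - f (tl x) - of_nat q * (F * f x)) / (P * (1 - F\<^sup>2))
      = ((of_nat (q + 1) * lam * F - of_nat q * F\<^sup>2) * f x - F * f (tl x)) / (P * F * (1 - F\<^sup>2))"
      using F_nonzero F_sq_neq_1 P(1) by (simp add: field_simps power2_eq_square)
    also have "\<dots> = \<nu> x"
      unfolding F_quadratic \<nu>_def harmonic_density_def P(2) using Cons by (simp add: algebra_simps)
    finally show ?thesis by simp
  qed
qed

section \<open>The horocyclic operator on the kernels\<close>

lemma binomial_split_top:
  fixes t c :: "'a :: comm_ring_1"
  shows "(t + c) ^ k = (\<Sum>j<k. of_nat (k choose j) * t ^ j * c ^ (k - j)) + t ^ k"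
  by (simp add: binomial_ring lessThan_Suc_atMost[symmetric])

definition hor_resolvent_coeff :: "nat \<Rightarrow> nat \<Rightarrow> complex" where
  "hor_resolvent_coeff k j =
    of_nat (k choose j) * (- ((-1) ^ (k - j)) / F - of_nat q * F) / of_nat (q + 1)"

text \<open>The coefficient of \<open>h\<^sup>k\<close> cancels by the quadratic equation for \<open>F\<close>.\<close>

lemma hor_resolvent_hor_kernel:
  "hor_resolvent q lam (hor_kernel q lam k) = (\<lambda>h. \<Sum>j<k. hor_resolvent_coeff k j * hor_kernel q lam j h)"
proof
  fix h
  define E where "E = F powi h"
  define t where "t = (of_int h :: complex)"
  have qc: "(of_nat q + 1 :: complex) \<noteq> 0" by (rule of_nat_add_1_neq_0)
  have nz: "(of_nat q + 1) * F \<noteq> 0" using qc F_nonzero by simp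
  have "(1 / F + of_nat q * F) / (of_nat q + 1) = (1 + of_nat q * F\<^sup>2) / ((of_nat q + 1) * F)"
    using F_nonzero qc by (simp add: field_simps power2_eq_square)
  also have "\<dots> = lam"
    using F_quadratic nz by (simp add: divide_eq_eq algebra_simps)
  finally have lam: "(1 / F + of_nat q * F) / (of_nat q + 1) = lam" .
  have left: "hor_kernel q lam k (h - 1) = E / F * (t + - 1) ^ k"
    unfolding hor_kernel_def E_def t_def using F_nonzero by (simp add: power_int_diff)
  have right: "hor_kernel q lam k (h + 1) = E * F * (t + 1) ^ k"
    unfolding hor_kernel_def E_def t_def using F_nonzero by (simp add: power_int_add_1)
  have kernel: "hor_kernel q lam j h = E * t ^ j" for j
    unfolding hor_kernel_def E_def t_def by simp
  have "E / (of_nat q + 1) * ((1 / F + of_nat q * F) * t ^ k)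
      = (1 / F + of_nat q * F) / (of_nat q + 1) * (E * t ^ k)"
    by simp
  then have centre: "lam * (E * t ^ k) = E / (of_nat q + 1) * ((1 / F + of_nat q * F) * t ^ k)"
    by (simp only: lam)
  have "(E / F * (t + - 1) ^ k + of_nat q * (E * F * (t + 1) ^ k)) / of_nat (q + 1)
      = E / (of_nat q + 1) * ((t + - 1) ^ k / F + of_nat q * F * (t + 1) ^ k)"
    using F_nonzero qc by (simp add: field_simps)
  then have "hor_resolvent q lam (hor_kernel q lam k) h = E / (of_nat q + 1) *
      ((1 / F + of_nat q * F) * t ^ k - (t + - 1) ^ k / F - of_nat q * F * (t + 1) ^ k)"
    unfolding hor_resolvent_def left right kernel centre by (simp add: algebra_simps)
  also have "\<dots> = E / (of_nat q + 1) * (\<Sum>j<k. of_nat (k choose j) * t ^ j *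
      (- ((-1) ^ (k - j)) / F - of_nat q * F))"
    unfolding binomial_split_top
    by (simp add: sum_divide_distrib sum_distrib_left sum_subtractf sum_negf sum.distrib algebra_simps
        diff_divide_distrib add_divide_distrib)
  also have "\<dots> = (\<Sum>j<k. hor_resolvent_coeff k j * hor_kernel q lam j h)"
    unfolding hor_resolvent_coeff_def kernel sum_distrib_left
    by (rule sum.cong[OF refl]) (use F_nonzero qc in \<open>simp add: field_simps\<close>)
  finally show "hor_resolvent q lam (hor_kernel q lam k) h
      = (\<Sum>j<k. hor_resolvent_coeff k j * hor_kernel q lam j h)" .
qed

lemma hor_resolvent_coeff_top_nonzero: "hor_resolvent_coeff (Suc k) k \<noteq> 0"
proof -
  have "1 / F - of_nat q * F \<noteq> 0"
  proof
    assume "1 / F - of_nat q * F = 0"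
    then have "1 - of_nat q * F\<^sup>2 = 0" using F_nonzero by (simp add: field_simps power2_eq_square)
    with q_F_sq_neq_1 show False by simp
  qed
  moreover have "(1 + of_nat k :: complex) \<noteq> 0" by (metis of_nat_Suc of_nat_neq_0)
  ultimately show ?thesis
    unfolding hor_resolvent_coeff_def using of_nat_add_1_neq_0[of q, where 'a=complex] by (simp add: add.commute)
qed

lemma hor_resolvent_hor_kernel_Suc:
  "hor_resolvent q lam (hor_kernel q lam (Suc k)) = (\<lambda>h. hor_resolvent_coeff (Suc k) k * hor_kernel q lam k h
      + (\<Sum>j<k. hor_resolvent_coeff (Suc k) j * hor_kernel q lam j h))"
  by (simp add: hor_resolvent_hor_kernel add.commute)

definition in_kernel_span :: "nat \<Rightarrow> (int \<Rightarrow> complex) \<Rightarrow> bool" where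
  "in_kernel_span k \<psi> \<longleftrightarrow> (\<exists>a. \<psi> = (\<lambda>h. \<Sum>j<k. a j * hor_kernel q lam j h))"

lemma in_kernel_spanI: "in_kernel_span k (\<lambda>h. \<Sum>j<k. a j * hor_kernel q lam j h)"
  unfolding in_kernel_span_def by (rule exI[of _ a]) (rule refl)

lemma in_kernel_span_zero: "in_kernel_span k (\<lambda>h. 0)"
  using in_kernel_spanI[of k "\<lambda>j. 0"] by simp

lemma in_kernel_span_linear:
  assumes "in_kernel_span k \<psi>" and "in_kernel_span k \<psi>'"
  shows "in_kernel_span k (\<lambda>h. c * \<psi> h + d * \<psi>' h)"
proof -
  obtain a b where "\<psi> = (\<lambda>h. \<Sum>j<k. a j * hor_kernel q lam j h)"
    and "\<psi>' = (\<lambda>h. \<Sum>j<k. b j * hor_kernel q lam j h)"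
    using assms unfolding in_kernel_span_def by blast
  then show ?thesis
    unfolding in_kernel_span_def
    by (intro exI[where x="\<lambda>j. c * a j + d * b j"])
      (simp add: sum_distrib_left sum.distrib algebra_simps)
qed

lemma in_kernel_span_sum:
  "finite J \<Longrightarrow> (\<And>j. j \<in> J \<Longrightarrow> in_kernel_span k (g j)) \<Longrightarrow> in_kernel_span k (\<lambda>h. \<Sum>j\<in>J. g j h)"
proof (induction J rule: finite_induct)
  case (insert j J)
  then show ?case using in_kernel_span_linear[of k "g j" _ 1 1] by simp
qed (simp add: in_kernel_span_zero)

lemma in_kernel_span_scale: "in_kernel_span k \<psi> \<Longrightarrow> in_kernel_span k (\<lambda>h. c * \<psi> h)"
  using in_kernel_span_linear[of k \<psi> \<psi> c 0] by simp

lemma in_kernel_span_hor_kernel: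
  assumes "j < k"
  shows "in_kernel_span k (\<lambda>h. c * hor_kernel q lam j h)"
proof -
  have "(\<Sum>i<k. (if i = j then c else 0) * hor_kernel q lam i h) = c * hor_kernel q lam j h" for h
    using assms by (simp add: if_distrib[of "\<lambda>a. a * _"] sum.delta' cong: if_cong)
  then show ?thesis using in_kernel_spanI[of k "\<lambda>i. if i = j then c else 0"] by simp
qed

lemma in_kernel_span_mono: "in_kernel_span k \<psi> \<Longrightarrow> k \<le> k' \<Longrightarrow> in_kernel_span k' \<psi>"
  unfolding in_kernel_span_def[of k]
  by (elim exE, simp only:, rule in_kernel_span_sum) (auto intro: in_kernel_span_hor_kernel)

lemma hor_resolvent_kernel_span:
  assumes "in_kernel_span (Suc k) \<psi>"
  shows "in_kernel_span k (hor_resolvent q lam \<psi>)"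
proof -
  obtain a where \<psi>: "\<psi> = (\<lambda>h. \<Sum>j<Suc k. a j * hor_kernel q lam j h)"
    using assms unfolding in_kernel_span_def by blast
  have kernels: "in_kernel_span k (hor_resolvent q lam (hor_kernel q lam j))" if "j < Suc k" for j
    unfolding hor_resolvent_hor_kernel
    by (rule in_kernel_span_sum) (use that in \<open>auto intro: in_kernel_span_hor_kernel\<close>)
  show ?thesis
    unfolding \<psi> hor_resolvent_sum hor_resolvent_scale
    by (intro in_kernel_span_sum in_kernel_span_scale kernels) auto
qed

text \<open>By the nonzero top coefficient, the triangular map \<open>hor_resolvent\<close> from the span of the
  first \<open>k + 1\<close> kernels to the span of the first \<open>k\<close> kernels is onto.\<close>

lemma hor_resolvent_onto_kernel_span:
  "in_kernel_span k \<psi> \<Longrightarrow> \<exists>\<psi>'. in_kernel_span (Suc k) \<psi>' \<and> hor_resolvent q lam \<psi>' = \<psi>"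
proof (induction k arbitrary: \<psi>)
  case 0
  then have "\<psi> = (\<lambda>h. 0)" unfolding in_kernel_span_def by auto
  then show ?case using in_kernel_span_zero hor_resolvent_zero by blast
next
  case (Suc k)
  then obtain a where a: "\<psi> = (\<lambda>h. \<Sum>j<Suc k. a j * hor_kernel q lam j h)"
    unfolding in_kernel_span_def by blast
  define c where "c = hor_resolvent_coeff (Suc k) k"
  define rest where "rest = (\<lambda>h. \<Sum>j<k. a j * hor_kernel q lam j h)"
  define lower where "lower = (\<lambda>h. \<Sum>j<k. hor_resolvent_coeff (Suc k) j * hor_kernel q lam j h)"
  have top: "hor_resolvent q lam (hor_kernel q lam (Suc k)) = (\<lambda>h. c * hor_kernel q lam k h + lower h)"
    unfolding hor_resolvent_hor_kernel_Suc lower_def c_def ..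
  have \<psi>: "\<psi> = (\<lambda>h. a k * hor_kernel q lam k h + rest h)"
    unfolding a rest_def by (simp add: add.commute)
  have "in_kernel_span k (\<lambda>h. 1 * rest h + (- (a k / c)) * lower h)"
    unfolding rest_def lower_def by (intro in_kernel_span_linear in_kernel_spanI)
  then obtain \<psi>'' where \<psi>'': "in_kernel_span (Suc k) \<psi>''"
      "hor_resolvent q lam \<psi>'' = (\<lambda>h. 1 * rest h + (- (a k / c)) * lower h)"
    using Suc.IH by blast
  define \<psi>' where "\<psi>' = (\<lambda>h. (a k / c) * hor_kernel q lam (Suc k) h + 1 * \<psi>'' h)"
  have "in_kernel_span (Suc (Suc k)) \<psi>'"
    unfolding \<psi>'_def
    by (intro in_kernel_span_linear in_kernel_span_hor_kernel[of _ _ 1, simplified]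
        in_kernel_span_mono[OF \<psi>''(1)]) auto
  moreover have "hor_resolvent q lam \<psi>' = \<psi>"
    unfolding \<psi>'_def hor_resolvent_linear \<psi>''(2) top \<psi>
    using hor_resolvent_coeff_top_nonzero[of k] by (auto simp: c_def field_simps)
  ultimately show ?case by blast
qed

lemma hor_resolvent_power_kernel_span: "in_kernel_span k \<psi> \<Longrightarrow> (hor_resolvent q lam ^^ k) \<psi> = (\<lambda>h. 0)"
proof (induction k arbitrary: \<psi>)
  case 0 then show ?case unfolding in_kernel_span_def by auto
next
  case (Suc k)
  then show ?case
    using Suc.IH[OF hor_resolvent_kernel_span[OF Suc.prems]]
    by (simp add: funpow_Suc_right del: funpow.simps)
qed

lemma hor_resolvent_power_hor_kernel:
  "\<exists>C. C \<noteq> 0 \<and> (hor_resolvent q lam ^^ k) (hor_kernel q lam k) = (\<lambda>h. C * hor_kernel q lam 0 h)"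
proof (induction k)
  case 0 then show ?case by (intro exI[where x=1]) simp
next
  case (Suc k)
  then obtain C where C: "C \<noteq> 0"
    "(hor_resolvent q lam ^^ k) (hor_kernel q lam k) = (\<lambda>h. C * hor_kernel q lam 0 h)"
    by blast
  define lower where "lower = (\<lambda>h. \<Sum>j<k. hor_resolvent_coeff (Suc k) j * hor_kernel q lam j h)"
  have "in_kernel_span k lower" unfolding lower_def by (rule in_kernel_spanI)
  moreover have "hor_resolvent q lam (hor_kernel q lam (Suc k))
      = (\<lambda>h. hor_resolvent_coeff (Suc k) k * hor_kernel q lam k h + lower h)"
    unfolding hor_resolvent_hor_kernel_Suc lower_def ..
  ultimately have "(hor_resolvent q lam ^^ k) (hor_resolvent q lam (hor_kernel q lam (Suc k)))
      = (\<lambda>h. (hor_resolvent_coeff (Suc k) k * C) * hor_kernel q lam 0 h)"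
    by (simp add: hor_resolvent_power_linear C(2) hor_resolvent_power_kernel_span mult.assoc)
  then show ?case
    using C(1) hor_resolvent_coeff_top_nonzero[of k]
    by (intro exI[where x="hor_resolvent_coeff (Suc k) k * C"])
      (simp add: funpow_Suc_right del: funpow.simps)
qed

section \<open>Representation of polyharmonic functions\<close>

definition representable :: "nat \<Rightarrow> (nat list \<Rightarrow> complex) \<Rightarrow> bool" where
  "representable n g \<longleftrightarrow> (\<exists>\<mu>. (\<forall>k<n. is_distribution q (\<mu> k)) \<and>
      (\<forall>x. tree_vertex q x \<longrightarrow> g x = (\<Sum>k<n. hor_integral (hor_kernel q lam k) (\<mu> k) x)))"

lemma representable_zero: "representable n (\<lambda>x. 0)"
  unfolding representable_def using is_distribution_zero
  by (intro exI[where x="\<lambda>k y. 0"]) (simp add: hor_integral_zero_distribution)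

lemma representable_add:
  assumes "representable n g" and "representable n g'"
  shows "representable n (\<lambda>x. g x + g' x)"
proof -
  obtain \<mu> \<mu>' where
    \<mu>: "\<forall>k<n. is_distribution q (\<mu> k)"
      "\<forall>x. tree_vertex q x \<longrightarrow> g x = (\<Sum>k<n. hor_integral (hor_kernel q lam k) (\<mu> k) x)"
    and \<mu>': "\<forall>k<n. is_distribution q (\<mu>' k)"
      "\<forall>x. tree_vertex q x \<longrightarrow> g' x = (\<Sum>k<n. hor_integral (hor_kernel q lam k) (\<mu>' k) x)"
    using assms unfolding representable_def by blast
  then show ?thesis
    unfolding representable_def
    by (intro exI[where x="\<lambda>k y. \<mu> k y + \<mu>' k y"])
      (simp add: is_distribution_add hor_integral_add_distribution sum.distrib)
qed

lemma representable_sum: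
  "finite J \<Longrightarrow> (\<And>j. j \<in> J \<Longrightarrow> representable n (g j)) \<Longrightarrow> representable n (\<lambda>x. \<Sum>j\<in>J. g j x)"
proof (induction J rule: finite_induct)
  case (insert j J)
  then show ?case using representable_add[of n "g j" "\<lambda>x. \<Sum>j\<in>J. g j x"] by simp
qed (simp add: representable_zero)

lemma representable_hor_integral:
  assumes "in_kernel_span n \<psi>" and "is_distribution q \<nu>"
  shows "representable n (hor_integral \<psi> \<nu>)"
proof -
  obtain a where a: "\<psi> = (\<lambda>h. \<Sum>j<n. a j * hor_kernel q lam j h)"
    using assms(1) unfolding in_kernel_span_def by blast
  show ?thesis
    unfolding representable_def a hor_integral_sum hor_integral_scale
    using is_distribution_scale[OF assms(2)]
    by (intro exI[where x="\<lambda>k y. a k * \<nu> y"]) (simp add: hor_integral_scale_distribution)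
qed

text \<open>Induction on the order: \<open>(\<lambda>I - P) f\<close> is represented by kernels of order \<open>n\<close>; lifting
  each of them through \<open>hor_resolvent_onto_kernel_span\<close> gives a representable \<open>g\<close> with
  \<open>(\<lambda>I - P) g = (\<lambda>I - P) f\<close>, and \<open>f - g\<close> is harmonic.\<close>

lemma polyharmonic_representable: "polyharmonic q lam (Suc n) f \<Longrightarrow> representable (Suc n) f"
proof (induction n arbitrary: f)
  case 0
  then have "\<forall>x. tree_vertex q x \<longrightarrow> resolvent_op q lam f x = 0"
    unfolding polyharmonic_def by simp
  then show ?case
    unfolding representable_def using harmonic_density_is_distribution hor_integral_harmonic_density
    by (intro exI[where x="\<lambda>k. harmonic_density f"]) simp
next
  case (Suc n)
  have "polyharmonic q lam (Suc n) (resolvent_op q lam f)"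
    using Suc.prems unfolding polyharmonic_def
    by (simp only: funpow_Suc_right[of _ "resolvent_op q lam"] o_apply)
  then obtain \<mu> where \<mu>: "\<forall>k<Suc n. is_distribution q (\<mu> k)"
      "\<forall>x. tree_vertex q x \<longrightarrow> resolvent_op q lam f x = (\<Sum>k<Suc n. hor_integral (hor_kernel q lam k) (\<mu> k) x)"
    using Suc.IH unfolding representable_def by blast
  have "\<forall>k. \<exists>\<psi>. k < Suc n \<longrightarrow>
      in_kernel_span (Suc (Suc n)) \<psi> \<and> hor_resolvent q lam \<psi> = hor_kernel q lam k"
    using hor_resolvent_onto_kernel_span[OF in_kernel_span_hor_kernel[of _ _ 1, simplified]] by blast
  then obtain \<Psi> where \<Psi>: "\<And>k. k < Suc n \<Longrightarrow>
      in_kernel_span (Suc (Suc n)) (\<Psi> k) \<and> hor_resolvent q lam (\<Psi> k) = hor_kernel q lam k"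
    by metis
  define g where "g = (\<lambda>x. \<Sum>k<Suc n. hor_integral (\<Psi> k) (\<mu> k) x)"
  have g: "representable (Suc (Suc n)) g"
    unfolding g_def using \<Psi> \<mu> by (intro representable_sum representable_hor_integral) auto
  have "resolvent_op q lam g x = resolvent_op q lam f x" if x: "tree_vertex q x" for x
    unfolding g_def resolvent_op_sum using resolvent_op_hor_integral[OF x] \<mu> \<Psi> x by simp
  then have "\<forall>x. tree_vertex q x \<longrightarrow> resolvent_op q lam (\<lambda>x. f x - g x) x = 0"
    by (simp add: resolvent_op_diff)
  then have "representable (Suc (Suc n)) (hor_integral (hor_kernel q lam 0) (harmonic_density (\<lambda>x. f x - g x)))"
    using harmonic_density_is_distribution
    by (intro representable_hor_integral in_kernel_span_hor_kernel[of _ _ 1, simplified]) auto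
  moreover have "hor_integral (hor_kernel q lam 0) (harmonic_density (\<lambda>x. f x - g x)) = (\<lambda>x. f x - g x)"
    by (rule ext) (rule hor_integral_harmonic_density)
  ultimately have "representable (Suc (Suc n)) (\<lambda>x. f x - g x)" by simp
  from representable_add[OF g this] show ?case by simp
qed

text \<open>The top distribution is isolated by applying \<open>(\<lambda>I - P)\<^sup>n\<close>, which kills all lower kernels.\<close>

lemma representation_of_zero:
  assumes "\<forall>k<n. is_distribution q (\<delta> k)"
    and "\<forall>x. tree_vertex q x \<longrightarrow> (\<Sum>k<n. hor_integral (hor_kernel q lam k) (\<delta> k) x) = 0"
  shows "\<forall>k<n. \<forall>x. tree_vertex q x \<longrightarrow> \<delta> k x = 0"
  using assms
proof (induction n)
  case (Suc n)
  define G where "G = (\<lambda>x. \<Sum>k<Suc n. hor_integral (hor_kernel q lam k) (\<delta> k) x)"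
  obtain C where C: "C \<noteq> 0" "(hor_resolvent q lam ^^ n) (hor_kernel q lam n) = (\<lambda>h. C * hor_kernel q lam 0 h)"
    using hor_resolvent_power_hor_kernel by blast
  have "C * hor_integral (hor_kernel q lam 0) (\<delta> n) x = 0" if x: "tree_vertex q x" for x
  proof -
    have "0 = (resolvent_op q lam ^^ n) G x"
      using resolvent_op_power_cong[where g=G and g'="\<lambda>x. 0" and m=n and lam=lam] Suc.prems(2) x
      unfolding G_def by (simp add: resolvent_op_power_zero)
    also have "\<dots> = (\<Sum>k<Suc n. hor_integral ((hor_resolvent q lam ^^ n) (hor_kernel q lam k)) (\<delta> k) x)"
      unfolding G_def resolvent_op_power_sum
      using resolvent_op_power_hor_integral Suc.prems(1) x by (intro sum.cong refl) auto
    also have "\<dots> = C * hor_integral (hor_kernel q lam 0) (\<delta> n) x"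
      using hor_resolvent_power_kernel_span[OF in_kernel_span_hor_kernel[of _ _ 1, simplified]]
      by (simp add: hor_integral_zero C(2) hor_integral_scale)
    finally show ?thesis by simp
  qed
  then have "\<forall>x. tree_vertex q x \<longrightarrow> hor_integral (hor_kernel q lam 0) (\<delta> n) x = 0"
    using C(1) by simp
  then have top: "\<forall>x. tree_vertex q x \<longrightarrow> \<delta> n x = 0"
    using hor_kernel_0_integral_eq_0_imp by blast
  have "hor_integral (hor_kernel q lam n) (\<delta> n) x = 0" if "tree_vertex q x" for x
    using top that hor_integral_cong_distribution[of q x "\<delta> n" "\<lambda>y. 0"]
    by (simp add: hor_integral_zero_distribution)
  then have "\<forall>k<n. \<forall>x. tree_vertex q x \<longrightarrow> \<delta> k x = 0"
    using Suc by simp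
  then show ?case using top less_Suc_eq by auto
qed simp

lemma representation_unique:
  assumes "\<forall>k<n. is_distribution q (\<mu> k)" and "\<forall>k<n. is_distribution q (\<nu> k)"
    and "\<forall>x. tree_vertex q x \<longrightarrow> (\<Sum>k<n. hor_integral (hor_kernel q lam k) (\<mu> k) x)
      = (\<Sum>k<n. hor_integral (hor_kernel q lam k) (\<nu> k) x)"
  shows "\<forall>k<n. \<forall>x. tree_vertex q x \<longrightarrow> \<mu> k x = \<nu> k x"
  using representation_of_zero[of n "\<lambda>k y. \<mu> k y - \<nu> k y"] assms
  by (simp add: is_distribution_diff hor_integral_diff_distribution sum_subtractf)

end

theorem corollary5p4:
  fixes q n :: nat and lam :: complex and f :: "nat list \<Rightarrow> complex"
  assumes "q \<ge> 2" and "n \<ge> 1"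
    and "lam \<notin> complex_of_real ` {- spec_radius q .. spec_radius q}"
    and "polyharmonic q lam n f"
  shows "\<exists>nu :: nat \<Rightarrow> nat list \<Rightarrow> complex.
           (\<forall>k<n. is_distribution q (nu k)) \<and>
           (\<forall>x. tree_vertex q x \<longrightarrow> f x = (\<Sum>k<n. kernel_integral q lam k (nu k) x)) \<and>
           (\<forall>mu :: nat \<Rightarrow> nat list \<Rightarrow> complex.
              (\<forall>k<n. is_distribution q (mu k)) \<and>
              (\<forall>x. tree_vertex q x \<longrightarrow> f x = (\<Sum>k<n. kernel_integral q lam k (mu k) x))
              \<longrightarrow> (\<forall>k<n. \<forall>x. tree_vertex q x \<longrightarrow> mu k x = nu k x))"
proof -
  interpret tree_resolvent q lam using assms(1,3) by unfold_locales
  obtain m where n: "n = Suc m" using assms(2) by (cases n) auto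
  obtain \<nu> where \<nu>: "\<forall>k<n. is_distribution q (\<nu> k)"
      "\<forall>x. tree_vertex q x \<longrightarrow> f x = (\<Sum>k<n. hor_integral (hor_kernel q lam k) (\<nu> k) x)"
    using polyharmonic_representable[of m f] assms(4) unfolding n representable_def by blast
  have "\<forall>k<n. \<forall>x. tree_vertex q x \<longrightarrow> \<mu> k x = \<nu> k x"
    if "\<forall>k<n. is_distribution q (\<mu> k)"
      and "\<forall>x. tree_vertex q x \<longrightarrow> f x = (\<Sum>k<n. hor_integral (hor_kernel q lam k) (\<mu> k) x)" for \<mu>
    using representation_unique[of n \<mu> \<nu>] that \<nu> by simp
  then show ?thesis
    unfolding kernel_integral_eq_hor_integral using \<nu> by blast
qed

end
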